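(* Let $G$ be a finite group, let $p$ be a prime, and let $A$ be a subgroup of $G$ of maximum order among the self-centralizing subgroups of $G$ (subgroups $B$ with $C_G(B)=B$). \begin{enumerate} \item If $|G:A|=p$ and $|G:Z(G)|=p^i$ with $i>2$, then $A$ is the unique self-centralizing subgroup of $G$ of maximum order. The same conclusion holds if $p$ is the smallest prime divisor of $|G|$, $|G:A|=p$ and $|G:Z(G)|>p^2$. \item If $|G:A|=p^2$, $|G:Z(G)|=p^i$ with $i>4$, and $G$ possesses a subgroup $T$ of index $p$ in $G$ whose center has index $p^3$ in $G$, then $T$ is the unique subgroup of $G$ of index $p$ whose center has index $p^3$ in $G$. The same conclusion holds if $p$ is the smallest prime divisor of $|G|$, $|G:A|=p^2$, $|G:Z(G)|>p^4$, and $G$ possesses such a subgroup $T$. \item If $|G:A|=p^2$, $|G:Z(G)|=p^i$ with $i>4$, and $G$ does not possess a subgroup of index $p$ in $G$ whose center has index $p^3$ in $G$, then $A$ is the unique self-centralizing subgroup of $G$ of maximum order. The same conclusion holds if $p$ is the smallest prime divisor of $|G|$, $|G:A|=p^2$, $|G:Z(G)|>p^4$, and $G$ does not possess such a subgroup. \end{enumerate} *)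

theory Defs
  imports "HOL-Algebra.Algebra"
begin

definition centralizer :: "('a, 'b) monoid_scheme \<Rightarrow> 'a set \<Rightarrow> 'a set" where
  "centralizer G B = {g \<in> carrier G. \<forall>b \<in> B. g \<otimes>\<^bsub>G\<^esub> b = b \<otimes>\<^bsub>G\<^esub> g}"

definition group_center :: "('a, 'b) monoid_scheme \<Rightarrow> 'a set" where
  "group_center G = centralizer G (carrier G)"

definition grp_index :: "('a, 'b) monoid_scheme \<Rightarrow> 'a set \<Rightarrow> nat" where
  "grp_index G H = card (rcosets\<^bsub>G\<^esub> H)"

definition self_centralizing :: "('a, 'b) monoid_scheme \<Rightarrow> 'a set \<Rightarrow> bool" where
  "self_centralizing G B \<longleftrightarrow> subgroup B G \<and> centralizer G B = B"

definition max_self_centralizing :: "('a, 'b) monoid_scheme \<Rightarrow> 'a set \<Rightarrow> bool" where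
  "max_self_centralizing G A \<longleftrightarrow> self_centralizing G A \<and>
     (\<forall>B. self_centralizing G B \<longrightarrow> card B \<le> card A)"

definition unique_max_self_centralizing :: "('a, 'b) monoid_scheme \<Rightarrow> 'a set \<Rightarrow> bool" where
  "unique_max_self_centralizing G A \<longleftrightarrow> max_self_centralizing G A \<and>
     (\<forall>B. max_self_centralizing G B \<longrightarrow> B = A)"

definition special_sub :: "('a, 'b) monoid_scheme \<Rightarrow> nat \<Rightarrow> 'a set \<Rightarrow> bool" where
  "special_sub G p T \<longleftrightarrow> subgroup T G \<and> grp_index G T = p \<and>
     grp_index G (group_center (G\<lparr>carrier := T\<rparr>)) = p ^ 3"

definition smallest_prime_divisor :: "nat \<Rightarrow> nat \<Rightarrow> bool" where
  "smallest_prime_divisor p n \<longleftrightarrow> Factorial_Ring.prime p \<and> p dvd n \<and>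
     (\<forall>q. Factorial_Ring.prime q \<and> q dvd n \<longrightarrow> p \<le> q)"

end

theory Submission
  imports Defs
begin

(*
  Let A \<noteq> B be self-centralizing subgroups of maximum order and D = A \<inter> B. Both are abelian,
  so C = C_G(D) contains A and B, and the product formula gives |A|^2 \<le> |G| |D|.

  If |G:A| = p, then C = G, i.e. D \<le> Z(G), and so |G:Z(G)| \<le> p^2.
  If |G:A| = p^2 and |G:Z(G)| > p^4, the same argument rules out C = G, so |G:C| = p; the centre
  of C is exactly D, and the product formula inside C gives |A:D| \<le> p. As |A:D| > 1 divides
  |G:Z(G)|, which has no divisors strictly between 1 and p, |A:D| = p and C has index p with
  centre of index p^3.
  For two such subgroups T \<noteq> T' we get Z(T) \<le> T' (otherwise Z(T') \<inter> T would be centralized by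
  T' and Z(T), hence central, and the product formula for Z(T') and T would give |G:Z(G)| \<le> p^4).
  So Z(T) \<union> Z(T') commutes and lies in an abelian subgroup of order at most |A|, while
  Z(T) \<inter> Z(T') is centralized by T and T', hence central; the product formula again yields
  |G:Z(G)| \<le> p^4.
*)

lemma le_by_factorizations:
  fixes n a b c d x y w v :: nat
  assumes "n = a * x" "n = b * y" "n = c * w" "a * b = c * d" "x * y \<le> w * v"
  shows "n \<le> d * v"
proof -
  have "n * n = (a * b) * (x * y)" using assms(1,2) by (simp add: ac_simps)
  also have "\<dots> \<le> (a * b) * (w * v)" using assms(5) by simp
  also have "\<dots> = n * (d * v)" using assms(3,4) by (simp add: ac_simps)
  finally show ?thesis by (cases "n = 0") auto
qed

lemma prime_le_of_dvd_prime_power: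
  fixes p k i :: nat
  assumes "Factorial_Ring.prime p" "k dvd p ^ i" "1 < k"
  shows "p \<le> k"
proof -
  obtain j where j: "k = p ^ j" using divides_primepow_nat[OF assms(1)] assms(2) by blast
  with assms(3) have "0 < j" by (cases j) auto
  then show ?thesis using j self_le_power prime_ge_1_nat[OF assms(1)] by blast
qed

lemma smallest_prime_divisor_le:
  assumes "smallest_prime_divisor p n" "k dvd n" "1 < k"
  shows "p \<le> k"
proof -
  obtain q where q: "Factorial_Ring.prime q" "q dvd k" using prime_factor_nat[of k] assms(3) by auto
  then have "p \<le> q" using assms(1,2) dvd_trans unfolding smallest_prime_divisor_def by blast
  also have "q \<le> k" using q(2) assms(3) by (simp add: dvd_imp_le)
  finally show ?thesis .
qed

context group
begin

lemma order_eq_index_mult_card: "subgroup H G \<Longrightarrow> order G = grp_index G H * card H"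
  unfolding grp_index_def by (simp add: lagrange)

lemma card_subgroup_dvd:
  assumes "subgroup H G" "subgroup K G" "H \<subseteq> K"
  shows "card H dvd card K"
proof -
  interpret K: group "G\<lparr>carrier := K\<rparr>" by (rule subgroup_imp_group[OF assms(2)])
  have "card (rcosets\<^bsub>G\<lparr>carrier := K\<rparr>\<^esub> H) * card H = card K"
    using K.lagrange[OF subgroup_incl[OF assms]] by (simp add: order_def)
  then show ?thesis by (metis dvd_triv_right)
qed

lemma centralizer_subgroup:
  assumes "S \<subseteq> carrier G"
  shows "subgroup (centralizer G S) G"
proof (rule subgroupI)
  show "centralizer G S \<subseteq> carrier G" by (auto simp: centralizer_def)
  have "\<one> \<in> centralizer G S" using assms by (auto simp: centralizer_def)
  then show "centralizer G S \<noteq> {}" by blast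
next
  fix a assume a: "a \<in> centralizer G S"
  show "inv a \<in> centralizer G S"
    unfolding centralizer_def
  proof (safe)
    show "inv a \<in> carrier G" using a by (auto simp: centralizer_def)
    fix b assume "b \<in> S"
    then have b: "b \<in> carrier G" and ac: "a \<in> carrier G" and ab: "a \<otimes> b = b \<otimes> a"
      using a assms by (auto simp: centralizer_def)
    have "inv a \<otimes> b = inv a \<otimes> (b \<otimes> a) \<otimes> inv a" using ac b by (simp add: m_assoc)
    also have "\<dots> = inv a \<otimes> (a \<otimes> b) \<otimes> inv a" using ab by simp
    also have "\<dots> = b \<otimes> inv a" using ac b by (simp add: m_assoc[symmetric])
    finally show "inv a \<otimes> b = b \<otimes> inv a" .
  qed
next
  fix a c assume "a \<in> centralizer G S" "c \<in> centralizer G S"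
  then show "a \<otimes> c \<in> centralizer G S"
    using assms unfolding centralizer_def by (auto simp: m_assoc[symmetric]) (metis m_assoc subsetD)
qed

lemma centralizer_antimono: "S \<subseteq> T \<Longrightarrow> centralizer G T \<subseteq> centralizer G S"
  unfolding centralizer_def by auto

lemma subset_centralizer_centralizer: "S \<subseteq> carrier G \<Longrightarrow> S \<subseteq> centralizer G (centralizer G S)"
  unfolding centralizer_def by auto

lemma centralizer_eq_carrier_iff:
  "S \<subseteq> carrier G \<Longrightarrow> centralizer G S = carrier G \<longleftrightarrow> S \<subseteq> group_center G"
  unfolding group_center_def centralizer_def by (auto simp: set_eq_iff) metis

lemma group_center_subgroup: "subgroup (group_center G) G"
  unfolding group_center_def by (rule centralizer_subgroup) (rule subset_refl)

lemma group_center_of_subgroup: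
  "T \<subseteq> carrier G \<Longrightarrow> group_center (G\<lparr>carrier := T\<rparr>) = T \<inter> centralizer G T"
  unfolding group_center_def centralizer_def by auto

lemma self_centralizing_subset_centralizer:
  "self_centralizing G B \<Longrightarrow> D \<subseteq> B \<Longrightarrow> B \<subseteq> centralizer G D"
  unfolding self_centralizing_def by (metis centralizer_antimono)

lemma group_center_subset_self_centralizing:
  "self_centralizing G B \<Longrightarrow> group_center G \<subseteq> B"
  unfolding self_centralizing_def group_center_def by (metis centralizer_antimono subgroup.subset)

lemma group_center_centralizer_inter:
  assumes A: "self_centralizing G A" and B: "self_centralizing G B"
  shows "group_center (G\<lparr>carrier := centralizer G (A \<inter> B)\<rparr>) = A \<inter> B"
proof -
  let ?C = "centralizer G (A \<inter> B)"
  have "A \<subseteq> ?C" "B \<subseteq> ?C"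
    using A B by (simp_all add: self_centralizing_subset_centralizer)
  then have "centralizer G ?C \<subseteq> centralizer G A \<inter> centralizer G B"
    by (simp add: centralizer_antimono)
  also have "\<dots> = A \<inter> B" using A B by (simp add: self_centralizing_def)
  finally have "centralizer G ?C \<subseteq> A \<inter> B" .
  moreover have "A \<inter> B \<subseteq> centralizer G ?C"
    using A by (intro subset_centralizer_centralizer) (auto simp: self_centralizing_def dest: subgroup.subset)
  moreover have "?C \<subseteq> carrier G" by (auto simp: centralizer_def)
  ultimately show ?thesis using \<open>A \<subseteq> ?C\<close> group_center_of_subgroup by blast
qed

end

locale finite_group = group +
  assumes finite_carrier [simp]: "finite (carrier G)"

context finite_group
begin

lemma finite_subgroup: "subgroup H G \<Longrightarrow> finite H"
  by (meson finite_carrier rev_finite_subset subgroup.subset)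

lemma card_subgroup_pos: "subgroup H G \<Longrightarrow> 0 < card H"
  by (simp add: subgroup.finite_imp_card_positive)

lemma grp_index_eqI: "subgroup H G \<Longrightarrow> order G = m * card H \<Longrightarrow> grp_index G H = m"
  using order_eq_index_mult_card[of H] card_subgroup_pos[of H] by simp

lemma less_index_iff:
  "subgroup H G \<Longrightarrow> m < grp_index G H \<longleftrightarrow> m * card H < order G"
  using order_eq_index_mult_card card_subgroup_pos by simp

lemma finite_group_subgroup: "subgroup H G \<Longrightarrow> finite_group (G\<lparr>carrier := H\<rparr>)"
  by (simp add: finite_group_axioms_def finite_group_def finite_subgroup subgroup_imp_group)

lemma card_mult_le_order:
  assumes H: "subgroup H G" and K: "subgroup K G"
  shows "card H * card K \<le> order G * card (H \<inter> K)"
proof -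
  have Hsub: "H \<subseteq> carrier G" using H subgroup.subset by blast
  have finR: "finite (rcosets K)" by (simp add: RCOSETS_def)
  have fiber: "card (H \<inter> C) \<le> card (H \<inter> K)" if C: "C \<in> rcosets K" for C
  proof (cases "H \<inter> C = {}")
    case False
    then obtain h where h: "h \<in> H" "h \<in> C" by blast
    have hc: "h \<in> carrier G" using h Hsub by auto
    have Ceq: "C = K #> h" using C h K repr_independence unfolding RCOSETS_def by blast
    show ?thesis
    proof (rule card_inj_on_le[where f = "\<lambda>x. x \<otimes> inv h"])
      show "inj_on (\<lambda>x. x \<otimes> inv h) (H \<inter> C)"
        by (rule inj_onI) (use hc Hsub in \<open>metis IntD1 inv_closed right_cancel subsetD\<close>)
      show "(\<lambda>x. x \<otimes> inv h) ` (H \<inter> C) \<subseteq> H \<inter> K"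
      proof (rule image_subsetI)
        fix x assume "x \<in> H \<inter> C"
        then have x: "x \<in> H" "x \<in> C" by auto
        then obtain k where k: "k \<in> K" "x = k \<otimes> h" using Ceq unfolding r_coset_def by blast
        then have "x \<otimes> inv h = k" using hc K subgroup.mem_carrier by (fastforce simp: m_assoc)
        moreover have "x \<otimes> inv h \<in> H" using x h H by (simp add: subgroup.m_closed subgroup.m_inv_closed)
        ultimately show "x \<otimes> inv h \<in> H \<inter> K" using k by auto
      qed
      show "finite (H \<inter> K)" using finite_subgroup[OF H] by simp
    qed
  qed simp
  have "card H \<le> card (\<Union>C\<in>rcosets K. H \<inter> C)"
    by (rule card_mono) (use finR Hsub rcosets_part_G[OF K] in auto)
  also have "\<dots> \<le> (\<Sum>C\<in>rcosets K. card (H \<inter> C))" by (rule card_UN_le[OF finR])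
  also have "\<dots> \<le> card (rcosets K) * card (H \<inter> K)"
    using sum_bounded_above[of "rcosets K" "\<lambda>C. card (H \<inter> C)"] fiber by auto
  finally have "card H * card K \<le> card (rcosets K) * card K * card (H \<inter> K)" by simp
  then show ?thesis using lagrange[OF K] by simp
qed

lemma card_mult_le_card:
  assumes "subgroup H G" "subgroup K G" "subgroup L G" "H \<subseteq> L" "K \<subseteq> L"
  shows "card H * card K \<le> card L * card (H \<inter> K)"
proof -
  interpret L: finite_group "G\<lparr>carrier := L\<rparr>" by (rule finite_group_subgroup[OF assms(3)])
  show ?thesis
    using L.card_mult_le_order[OF subgroup_incl[OF assms(1,3,4)] subgroup_incl[OF assms(2,3,5)]]
    by (simp add: order_def)
qed

lemma index_factorization:
  assumes H: "subgroup H G" and K: "subgroup K G" and "H \<subseteq> K" and c: "order G = c * card H"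
  obtains m r where "c = r * m" "card K = m * card H" "order G = r * card K"
    "m = 1 \<longleftrightarrow> H = K" "r = 1 \<longleftrightarrow> K = carrier G"
proof -
  obtain m where m: "card K = m * card H"
    using card_subgroup_dvd[OF assms(1-3)] by (metis dvdE mult.commute)
  obtain r where r: "order G = r * card K"
    using order_eq_index_mult_card[OF K] by blast
  have "c = r * m"
    using c r m card_subgroup_pos[OF H] by (simp add: mult.assoc)
  moreover have "m = 1 \<longleftrightarrow> H = K"
    using m card_subgroup_pos[OF H] card_seteq[OF finite_subgroup[OF K] \<open>H \<subseteq> K\<close>] by auto
  moreover have "r = 1 \<longleftrightarrow> K = carrier G"
    using r card_subgroup_pos[OF K] card_seteq[OF finite_carrier subgroup.subset[OF K]]
    by (auto simp: order_def)
  ultimately show thesis using that m r by blast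
qed

lemma prime_index_subgroup_maximal:
  assumes "Factorial_Ring.prime p" "subgroup H G" "subgroup K G" "H \<subseteq> K" "H \<noteq> K" "order G = p * card H"
  shows "K = carrier G"
proof -
  obtain m r where "p = r * m" "m = 1 \<longleftrightarrow> H = K" "r = 1 \<longleftrightarrow> K = carrier G"
    using index_factorization[OF assms(2-4,6)] by metis
  then show ?thesis using assms(1,5) prime_product by blast
qed

lemma index_of_intermediate_subgroup:
  assumes p: "Factorial_Ring.prime p" and "subgroup H G" "subgroup K G" "H \<subseteq> K" "H \<noteq> K" "K \<noteq> carrier G"
    and "order G = p ^ 2 * card H"
  shows "order G = p * card K"
proof -
  obtain m r where rm: "p ^ 2 = r * m" "m \<noteq> 1" "r \<noteq> 1" and K: "order G = r * card K"
    using index_factorization[OF assms(2-4,7)] assms(5,6) by metis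
  then obtain j where j: "j \<le> 2" "r = p ^ j"
    using divides_primepow_nat[OF p, of r 2] by auto
  have "j \<noteq> 2" using rm j prime_gt_0_nat[OF p] by auto
  with j rm(3) have "r = p" by (cases j) (auto simp: numeral_2_eq_2 le_Suc_eq)
  then show ?thesis using K by simp
qed

lemma subset_center_if_centralizer_exceeds_prime_index:
  assumes "Factorial_Ring.prime p" "subgroup H G" "order G = p * card H" "D \<subseteq> carrier G"
    and "H \<subseteq> centralizer G D" "\<not> centralizer G D \<subseteq> H"
  shows "D \<subseteq> group_center G"
proof -
  have "centralizer G D = carrier G"
    using prime_index_subgroup_maximal[OF assms(1,2) centralizer_subgroup[OF assms(4)] assms(5) _ assms(3)]
      assms(6) by blast
  then show ?thesis using centralizer_eq_carrier_iff[OF assms(4)] by blast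
qed

lemma commuting_subset_extends_to_self_centralizing:
  assumes S: "S \<subseteq> carrier G" "S \<subseteq> centralizer G S"
  obtains B where "self_centralizing G B" "S \<subseteq> B"
proof -
  \<comment> \<open>An inclusion-maximal commuting set is its own centralizer, hence a subgroup.\<close>
  let ?F = "{M. M \<subseteq> centralizer G M}"
  have "?F \<subseteq> Pow (carrier G)" by (auto simp: centralizer_def)
  then have "finite ?F" by (rule finite_subset) simp
  then obtain M where M: "M \<in> ?F" "S \<subseteq> M" and maximal: "\<forall>M'\<in>?F. M \<subseteq> M' \<longrightarrow> M = M'"
    using finite_has_maximal2[of ?F S] S(2) by blast
  have Mc: "M \<subseteq> carrier G" using M(1) by (auto simp: centralizer_def)
  have "centralizer G M \<subseteq> M"
  proof
    fix g assume "g \<in> centralizer G M"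
    then have "insert g M \<in> ?F" using M(1) Mc by (auto simp: centralizer_def)
    then show "g \<in> M" using maximal by blast
  qed
  then have "self_centralizing G M"
    using M(1) centralizer_subgroup[OF Mc] by (simp add: self_centralizing_def)
  then show thesis using that M(2) by blast
qed

lemma max_self_centralizing_card_eq:
  "max_self_centralizing G A \<Longrightarrow> max_self_centralizing G B \<Longrightarrow> card B = card A"
  unfolding max_self_centralizing_def by (meson antisym)

lemma max_self_centralizing_not_subset:
  assumes "max_self_centralizing G A" "max_self_centralizing G B" "B \<noteq> A"
  shows "\<not> B \<subseteq> A"
proof
  assume "B \<subseteq> A"
  moreover have "finite A"
    using assms(1) finite_subgroup by (simp add: max_self_centralizing_def self_centralizing_def)
  ultimately have "B = A"
    using card_seteq max_self_centralizing_card_eq[OF assms(1,2)] by (metis order_refl)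
  with assms(3) show False ..
qed

lemma order_le_of_inter_central:
  assumes A: "max_self_centralizing G A" and B: "max_self_centralizing G B"
    and central: "A \<inter> B \<subseteq> group_center G" and m: "order G = m * card A"
  shows "order G \<le> m ^ 2 * card (group_center G)"
proof -
  have "subgroup A G" "subgroup B G"
    using A B by (simp_all add: max_self_centralizing_def self_centralizing_def)
  then have "card A * card B \<le> order G * card (A \<inter> B)" by (rule card_mult_le_order)
  also have "\<dots> \<le> order G * card (group_center G)"
    using central finite_subgroup[OF group_center_subgroup] by (simp add: card_mono)
  finally have "card A * card A \<le> order G * card (group_center G)"
    using max_self_centralizing_card_eq[OF A B] by simp
  with m show ?thesis
    by (intro le_by_factorizations[of "order G" m "card A" m "card A" 1 "order G"])
      (simp_all add: power2_eq_square)
qed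

lemma unique_max_self_centralizing_of_index_prime:
  assumes p: "Factorial_Ring.prime p" and A: "max_self_centralizing G A"
    and idxA: "grp_index G A = p" and idxZ: "p ^ 2 < grp_index G (group_center G)"
  shows "unique_max_self_centralizing G A"
proof -
  have "B = A" if B: "max_self_centralizing G B" for B
  proof (rule ccontr)
    assume "B \<noteq> A"
    have sc: "self_centralizing G A" "self_centralizing G B"
      using A B by (simp_all add: max_self_centralizing_def)
    then have Asub: "subgroup A G" by (simp add: self_centralizing_def)
    have oA: "order G = p * card A" using order_eq_index_mult_card[OF Asub] idxA by simp
    have "A \<inter> B \<subseteq> group_center G"
    proof (rule subset_center_if_centralizer_exceeds_prime_index[OF p Asub oA])
      show "A \<inter> B \<subseteq> carrier G" using Asub subgroup.subset by blast
      show "A \<subseteq> centralizer G (A \<inter> B)" using sc(1) by (simp add: self_centralizing_subset_centralizer)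
      have "B \<subseteq> centralizer G (A \<inter> B)" using sc(2) by (simp add: self_centralizing_subset_centralizer)
      moreover have "\<not> B \<subseteq> A" by (rule max_self_centralizing_not_subset[OF A B \<open>B \<noteq> A\<close>])
      ultimately show "\<not> centralizer G (A \<inter> B) \<subseteq> A" by blast
    qed
    then have "order G \<le> p ^ 2 * card (group_center G)"
      by (rule order_le_of_inter_central[OF A B _ oA])
    moreover have "p ^ 2 * card (group_center G) < order G"
      using idxZ less_index_iff[OF group_center_subgroup] by blast
    ultimately show False by simp
  qed
  with A show ?thesis unfolding unique_max_self_centralizing_def by blast
qed

lemma special_subD:
  assumes "special_sub G p T"
  shows "subgroup T G" "order G = p * card T"
    "subgroup (T \<inter> centralizer G T) G" "order G = p ^ 3 * card (T \<inter> centralizer G T)"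
proof -
  show T: "subgroup T G" using assms by (simp add: special_sub_def)
  then have Tc: "T \<subseteq> carrier G" by (rule subgroup.subset)
  show "order G = p * card T" using assms order_eq_index_mult_card[OF T] by (simp add: special_sub_def)
  show Z: "subgroup (T \<inter> centralizer G T) G"
    by (rule subgroups_Inter_pair[OF T centralizer_subgroup[OF Tc]])
  show "order G = p ^ 3 * card (T \<inter> centralizer G T)"
    using assms order_eq_index_mult_card[OF Z] group_center_of_subgroup[OF Tc]
    by (simp add: special_sub_def)
qed

lemma special_sub_center_subset:
  assumes p: "Factorial_Ring.prime p" and T: "special_sub G p T" and T': "special_sub G p T'"
    and idxZ: "p ^ 4 < grp_index G (group_center G)"
  shows "T \<inter> centralizer G T \<subseteq> T'"
proof (rule ccontr)
  assume "\<not> T \<inter> centralizer G T \<subseteq> T'"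
  then obtain z where z: "z \<in> T \<inter> centralizer G T" "z \<notin> T'" by blast
  note t = special_subD[OF T] and t' = special_subD[OF T']
  let ?Y = "(T' \<inter> centralizer G T') \<inter> T"
  have "?Y \<subseteq> group_center G"
  proof (rule subset_center_if_centralizer_exceeds_prime_index[OF p t'(1,2)])
    show "?Y \<subseteq> carrier G" using t(1) subgroup.subset by blast
    show "T' \<subseteq> centralizer G ?Y"
      using t'(1) subgroup.subset unfolding centralizer_def by fastforce
    have "z \<in> centralizer G ?Y" using z(1) unfolding centralizer_def by auto
    with z(2) show "\<not> centralizer G ?Y \<subseteq> T'" by blast
  qed
  then have "card (T' \<inter> centralizer G T') * card T \<le> order G * card (group_center G)"
    using card_mult_le_order[OF t'(3) t(1)] finite_subgroup[OF group_center_subgroup]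
    by (meson card_mono le_trans mult_le_mono2)
  moreover have "p ^ 3 * p = 1 * p ^ 4" by (simp flip: power_Suc2)
  ultimately have "order G \<le> p ^ 4 * card (group_center G)"
    using le_by_factorizations[OF t'(4) t(2) mult_1[symmetric]] by blast
  then show False using idxZ less_index_iff[OF group_center_subgroup] by simp
qed

lemma special_sub_centers_inter_central:
  assumes p: "Factorial_Ring.prime p" and T: "special_sub G p T" and T': "special_sub G p T'"
    and "T' \<noteq> T"
  shows "(T \<inter> centralizer G T) \<inter> (T' \<inter> centralizer G T') \<subseteq> group_center G"
    (is "?W \<subseteq> _")
proof -
  note t = special_subD[OF T] and t' = special_subD[OF T']
  show ?thesis
  proof (rule subset_center_if_centralizer_exceeds_prime_index[OF p t(1,2)])
    show "?W \<subseteq> carrier G" using t(1) subgroup.subset by blast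
    show "T \<subseteq> centralizer G ?W"
      using t(1) subgroup.subset unfolding centralizer_def by fastforce
    have "T' \<subseteq> centralizer G ?W"
      using t'(1) subgroup.subset unfolding centralizer_def by fastforce
    moreover have "\<not> T' \<subseteq> T"
    proof
      assume "T' \<subseteq> T"
      moreover have "card T \<le> card T'" using t(2) t'(2) prime_gt_0_nat[OF p] by simp
      ultimately show False using card_seteq finite_subgroup[OF t(1)] \<open>T' \<noteq> T\<close> by blast
    qed
    ultimately show "\<not> centralizer G ?W \<subseteq> T" by blast
  qed
qed

lemma special_sub_unique:
  assumes p: "Factorial_Ring.prime p" and A: "max_self_centralizing G A"
    and idxA: "grp_index G A = p ^ 2" and idxZ: "p ^ 4 < grp_index G (group_center G)"
    and T: "special_sub G p T" and T': "special_sub G p T'"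
  shows "T' = T"
proof (rule ccontr)
  assume "T' \<noteq> T"
  note t = special_subD[OF T] and t' = special_subD[OF T']
  define Z1 Z2 where "Z1 = T \<inter> centralizer G T" and "Z2 = T' \<inter> centralizer G T'"
  have Z1: "Z1 \<subseteq> T'" and Z2: "Z2 \<subseteq> T"
    using special_sub_center_subset[OF p T T' idxZ] special_sub_center_subset[OF p T' T idxZ]
    by (simp_all add: Z1_def Z2_def)
  have "Z1 \<union> Z2 \<subseteq> T \<inter> T'" using Z1 Z2 by (auto simp: Z1_def Z2_def)
  then have "Z1 \<union> Z2 \<subseteq> carrier G" "Z1 \<union> Z2 \<subseteq> centralizer G (Z1 \<union> Z2)"
    using t(1) subgroup.subset centralizer_antimono[of "Z1 \<union> Z2" T] centralizer_antimono[of "Z1 \<union> Z2" T']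
    unfolding Z1_def Z2_def by blast+
  then obtain B where B: "self_centralizing G B" "Z1 \<union> Z2 \<subseteq> B"
    by (rule commuting_subset_extends_to_self_centralizing)
  have Bsub: "subgroup B G" using B(1) by (simp add: self_centralizing_def)
  have "Z1 \<inter> Z2 \<subseteq> group_center G"
    using special_sub_centers_inter_central[OF p T T' \<open>T' \<noteq> T\<close>] by (simp add: Z1_def Z2_def)
  have "card Z1 * card Z2 \<le> card B * card (Z1 \<inter> Z2)"
    using card_mult_le_card[OF t(3) t'(3) Bsub] B(2) by (simp add: Z1_def Z2_def)
  also have "\<dots> \<le> card A * card (group_center G)"
  proof (rule mult_le_mono)
    show "card B \<le> card A" using A B(1) by (simp add: max_self_centralizing_def)
    show "card (Z1 \<inter> Z2) \<le> card (group_center G)"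
      by (rule card_mono[OF finite_subgroup[OF group_center_subgroup]]) fact
  qed
  finally have Z12: "card Z1 * card Z2 \<le> card A * card (group_center G)" .
  have "subgroup A G" using A by (simp add: max_self_centralizing_def self_centralizing_def)
  then have oA: "order G = p ^ 2 * card A" using order_eq_index_mult_card idxA by simp
  have "p ^ 3 * p ^ 3 = p ^ 2 * p ^ 4" by (simp flip: power_add)
  from le_by_factorizations[OF t(4)[folded Z1_def] t'(4)[folded Z2_def] oA this Z12]
  show False using idxZ less_index_iff[OF group_center_subgroup] by simp
qed

lemma index_centralizer_inter:
  assumes p: "Factorial_Ring.prime p" and A: "max_self_centralizing G A"
    and B: "max_self_centralizing G B" and "B \<noteq> A"
    and idxA: "grp_index G A = p ^ 2" and idxZ: "p ^ 4 < grp_index G (group_center G)"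
  shows "order G = p * card (centralizer G (A \<inter> B))"
proof -
  let ?C = "centralizer G (A \<inter> B)"
  have sc: "self_centralizing G A" "self_centralizing G B"
    using A B by (simp_all add: max_self_centralizing_def)
  then have Asub: "subgroup A G" by (simp add: self_centralizing_def)
  then have Dc: "A \<inter> B \<subseteq> carrier G" using subgroup.subset by blast
  have oA: "order G = p ^ 2 * card A" using order_eq_index_mult_card[OF Asub] idxA by simp
  have AC: "A \<subseteq> ?C" and BC: "B \<subseteq> ?C"
    using sc by (simp_all add: self_centralizing_subset_centralizer)
  have "A \<noteq> ?C" using BC max_self_centralizing_not_subset[OF A B \<open>B \<noteq> A\<close>] by blast
  moreover have "?C \<noteq> carrier G"
  proof
    assume "?C = carrier G"
    then have "A \<inter> B \<subseteq> group_center G" using centralizer_eq_carrier_iff[OF Dc] by blast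
    from order_le_of_inter_central[OF A B this oA]
    have "order G \<le> p ^ 4 * card (group_center G)" by (simp flip: power_mult)
    then show False using idxZ less_index_iff[OF group_center_subgroup] by simp
  qed
  ultimately show ?thesis
    using index_of_intermediate_subgroup[OF p Asub centralizer_subgroup[OF Dc] AC _ _ oA] by blast
qed

lemma card_le_prime_mult_card_inter:
  assumes p: "Factorial_Ring.prime p" and A: "max_self_centralizing G A"
    and B: "max_self_centralizing G B" and "B \<noteq> A"
    and idxA: "grp_index G A = p ^ 2" and idxZ: "p ^ 4 < grp_index G (group_center G)"
  shows "card A \<le> p * card (A \<inter> B)"
proof -
  let ?C = "centralizer G (A \<inter> B)"
  have sc: "self_centralizing G A" "self_centralizing G B"
    using A B by (simp_all add: max_self_centralizing_def)
  then have Asub: "subgroup A G" and Bsub: "subgroup B G" by (simp_all add: self_centralizing_def)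
  have Csub: "subgroup ?C G" using Asub subgroup.subset by (blast intro: centralizer_subgroup)
  have prod: "card A * card B \<le> card ?C * card (A \<inter> B)"
    using card_mult_le_card[OF Asub Bsub Csub] sc by (simp add: self_centralizing_subset_centralizer)
  have oA: "order G = p ^ 2 * card A" using order_eq_index_mult_card[OF Asub] idxA by simp
  then have oB: "order G = p ^ 2 * card B" using max_self_centralizing_card_eq[OF A B] by simp
  have oC: "order G = p * card ?C" by (rule index_centralizer_inter[OF p A B \<open>B \<noteq> A\<close> idxA idxZ])
  have "p ^ 2 * p ^ 2 = p * p ^ 3" by (simp flip: power_add power_Suc)
  from le_by_factorizations[OF oA oB oC this prod]
  have "p ^ 2 * card A \<le> p ^ 2 * (p * card (A \<inter> B))"
    using oA by (simp add: power3_eq_cube power2_eq_square ac_simps)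
  then show ?thesis using prime_gt_0_nat[OF p] by simp
qed

(* The two alternative hypotheses of the corollary (|G:Z(G)| a power of p, or p the smallest
   prime divisor of |G|) are used only through the condition small_divisors. *)
lemma special_sub_centralizer_inter:
  assumes p: "Factorial_Ring.prime p" and A: "max_self_centralizing G A"
    and B: "max_self_centralizing G B" and "B \<noteq> A"
    and idxA: "grp_index G A = p ^ 2" and idxZ: "p ^ 4 < grp_index G (group_center G)"
    and small_divisors: "\<forall>k. k dvd grp_index G (group_center G) \<longrightarrow> 1 < k \<longrightarrow> p \<le> k"
  shows "special_sub G p (centralizer G (A \<inter> B))"
proof -
  let ?D = "A \<inter> B" and ?C = "centralizer G (A \<inter> B)"
  have sc: "self_centralizing G A" "self_centralizing G B"
    using A B by (simp_all add: max_self_centralizing_def)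
  then have Asub: "subgroup A G" and Bsub: "subgroup B G" by (simp_all add: self_centralizing_def)
  then have Dsub: "subgroup ?D G" and Dc: "?D \<subseteq> carrier G"
    using subgroups_Inter_pair subgroup.subset by blast+
  have Csub: "subgroup ?C G" by (rule centralizer_subgroup[OF Dc])
  have oA: "order G = p ^ 2 * card A" using order_eq_index_mult_card[OF Asub] idxA by simp
  have oC: "order G = p * card ?C" by (rule index_centralizer_inter[OF p A B \<open>B \<noteq> A\<close> idxA idxZ])
  obtain k where k: "card A = k * card ?D"
    using card_subgroup_dvd[OF Dsub Asub] by (metis Int_lower1 dvdE mult.commute)
  have Dpos: "0 < card ?D" by (rule card_subgroup_pos[OF Dsub])
  have "k \<le> p"
    using card_le_prime_mult_card_inter[OF p A B \<open>B \<noteq> A\<close> idxA idxZ] k Dpos by simp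
  moreover have "p \<le> k"
  proof -
    have "group_center G \<subseteq> ?D" using sc by (simp add: group_center_subset_self_centralizing)
    then obtain s where s: "card ?D = s * card (group_center G)"
      using card_subgroup_dvd[OF group_center_subgroup Dsub] by (metis dvdE mult.commute)
    have "grp_index G (group_center G) = p ^ 2 * s * k"
      using oA k s by (intro grp_index_eqI[OF group_center_subgroup]) (simp add: ac_simps)
    moreover have "1 < k"
    proof -
      have "?D \<noteq> A" using max_self_centralizing_not_subset[OF B A] \<open>B \<noteq> A\<close> by blast
      then have "card ?D < card A"
        using finite_subgroup[OF Asub] by (meson Int_lower1 psubsetI psubset_card_mono)
      then show ?thesis using k by (cases k) auto
    qed
    ultimately show ?thesis using small_divisors by simp
  qed
  ultimately have "order G = p ^ 3 * card ?D" using oA k by (simp add: power_numeral_reduce)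
  then have "grp_index G ?D = p ^ 3" by (rule grp_index_eqI[OF Dsub])
  then show ?thesis
    unfolding special_sub_def using Csub grp_index_eqI[OF Csub oC] group_center_centralizer_inter[OF sc]
    by simp
qed

lemma unique_max_self_centralizing_of_index_prime_square:
  assumes p: "Factorial_Ring.prime p" and A: "max_self_centralizing G A"
    and idxA: "grp_index G A = p ^ 2" and idxZ: "p ^ 4 < grp_index G (group_center G)"
    and small_divisors: "\<forall>k. k dvd grp_index G (group_center G) \<longrightarrow> 1 < k \<longrightarrow> p \<le> k"
    and no_special: "\<not> (\<exists>T. special_sub G p T)"
  shows "unique_max_self_centralizing G A"
  using A special_sub_centralizer_inter[OF p A _ _ idxA idxZ small_divisors] no_special
  unfolding unique_max_self_centralizing_def by blast

end

theorem corollary2p2: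
  fixes G (structure) and p :: nat and A :: "'a set"
  assumes "group G" and "finite (carrier G)" and "Factorial_Ring.prime p"
    and "max_self_centralizing G A"
  shows
   "((grp_index G A = p \<and> (\<exists>i>2. grp_index G (group_center G) = p ^ i))
        \<longrightarrow> unique_max_self_centralizing G A)
    \<and> ((smallest_prime_divisor p (order G) \<and> grp_index G A = p
         \<and> grp_index G (group_center G) > p ^ 2)
        \<longrightarrow> unique_max_self_centralizing G A)
    \<and> (\<forall>T. (grp_index G A = p ^ 2 \<and> (\<exists>i>4. grp_index G (group_center G) = p ^ i)
              \<and> special_sub G p T)
          \<longrightarrow> (\<forall>T'. special_sub G p T' \<longrightarrow> T' = T))
    \<and> (\<forall>T. (smallest_prime_divisor p (order G) \<and> grp_index G A = p ^ 2
              \<and> grp_index G (group_center G) > p ^ 4 \<and> special_sub G p T)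
          \<longrightarrow> (\<forall>T'. special_sub G p T' \<longrightarrow> T' = T))
    \<and> ((grp_index G A = p ^ 2 \<and> (\<exists>i>4. grp_index G (group_center G) = p ^ i)
         \<and> \<not> (\<exists>T. special_sub G p T))
        \<longrightarrow> unique_max_self_centralizing G A)
    \<and> ((smallest_prime_divisor p (order G) \<and> grp_index G A = p ^ 2
         \<and> grp_index G (group_center G) > p ^ 4 \<and> \<not> (\<exists>T. special_sub G p T))
        \<longrightarrow> unique_max_self_centralizing G A)"
proof -
  interpret finite_group G using assms(1,2) by (simp add: finite_group_def finite_group_axioms_def)
  note p = assms(3) and A = assms(4)
  let ?z = "grp_index G (group_center G)"
  have above: "p ^ m < ?z" if "\<exists>i>m. ?z = p ^ i" for m
    using that power_strict_increasing prime_gt_1_nat[OF p] by metis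
  have "?z dvd order G"
    using order_eq_index_mult_card[OF group_center_subgroup] by (metis dvd_triv_left)
  then have small_divisors: "\<forall>k. k dvd ?z \<longrightarrow> 1 < k \<longrightarrow> p \<le> k"
    if "(\<exists>i. ?z = p ^ i) \<or> smallest_prime_divisor p (order G)"
    using that prime_le_of_dvd_prime_power[OF p] smallest_prime_divisor_le dvd_trans by metis
  show ?thesis
    using unique_max_self_centralizing_of_index_prime[OF p A] special_sub_unique[OF p A]
      unique_max_self_centralizing_of_index_prime_square[OF p A] above small_divisors
    by blast
qed

end
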